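(* Let $\{t_n\}_{n\in\mathbb Z}\subset\mathbb R$ be increasing with $t_n\to\pm\infty$ as $n\to\pm\infty$, and let $\mu_n>0$ with $\sum_n\mu_n<\infty$. Let $A$ be an entire function, real on $\mathbb R$, with only simple real zeros, located exactly at the points $t_n$. Define the entire function $B$ by $$\frac{B(z)}{A(z)}=\sum_n\frac{\mu_n}{z-t_n},$$ and let $s_n$ denote the zero of $B$ in $(t_n,t_{n+1})$. Then $$\sum_{s_n>0}\frac{t_{n+1}-s_n}{s_n}<\infty,\qquad \sum_{s_n<0}\frac{s_n-t_n}{|s_n|}<\infty.$$ *)

theory Defs
  imports "HOL-Analysis.Analysis"
begin

end

theory Submission
  imports Defs "HOL-Computational_Algebra.Polynomial"
begin

(* Off the poles, B/A is the Cauchy transform x \<mapsto> \<Sum>k. \<mu> k / (x - t k), so the real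
   zeros s n of B are the zeros of this transform, one in each gap (t n, t (n + 1)).  The
   argument works with the truncations to the windows {-N..N}.  There the numerator of the
   truncated transform is a polynomial whose roots are its zeros r n in the interior gaps, so
   evaluating at i and comparing moduli bounds the products of the ratios
   jb (t (outer_end (r n) n)) / jb (r n), where jb x = sqrt (1 + x\<^sup>2) = |i - x| and the outer
   end is the endpoint of the gap farther from the origin; the bound is
   (total mass) * (1 + (t 0)\<^sup>2) / \<mu> 0, independent of N.  The truncated zeros converge to the
   s n, so the same bound holds for the s n.  Finally, for |s n| \<ge> 1 the relative gap
   |t (outer_end ..) - s n| / |s n| is at most the squared ratio minus one, and a family of
   nonnegative numbers with bounded finite products of 1 + u is summable. *)

(* The Japanese bracket; it is the distance from the real point x to i, and the
   weight in which the interlacing estimates are measured. *)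
definition jb :: "real \<Rightarrow> real" where
  "jb x = sqrt (1 + x\<^sup>2)"

definition outer_end :: "real \<Rightarrow> int \<Rightarrow> int" where
  "outer_end x n = (if 0 \<le> x then n + 1 else n)"

definition cauchy_sum :: "(int \<Rightarrow> real) \<Rightarrow> (int \<Rightarrow> real) \<Rightarrow> int set \<Rightarrow> real \<Rightarrow> real" where
  "cauchy_sum t \<mu> I x = (\<Sum>k\<in>I. \<mu> k / (x - t k))"

(* The Cauchy transform of the discrete measure with masses \<mu> k at the points t k,
   considered on the real line; away from the poles it is the restriction of B/A. *)
definition cauchy_transform :: "(int \<Rightarrow> real) \<Rightarrow> (int \<Rightarrow> real) \<Rightarrow> real \<Rightarrow> real" where
  "cauchy_transform t \<mu> x = (\<Sum>\<^sub>\<infinity>k. \<mu> k / (x - t k))"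

lemma cmod_i_minus_real: "cmod (\<i> - complex_of_real x) = jb x"
  by (simp add: cmod_def jb_def add.commute)

lemma jb_ge_1: "1 \<le> jb x"
  by (simp add: jb_def)

lemma jb_pos: "0 < jb x"
  using jb_ge_1[of x] by linarith

lemma jb_nonzero: "jb x \<noteq> 0"
  using jb_pos[of x] by linarith

lemma jb_abs: "jb \<bar>x\<bar> = jb x"
  by (simp add: jb_def)

lemma jb_mono: "\<bar>x\<bar> \<le> \<bar>y\<bar> \<Longrightarrow> jb x \<le> jb y"
  unfolding jb_def by (simp add: abs_le_square_iff)

lemma jb_squared: "(jb x)\<^sup>2 = 1 + x\<^sup>2"
  unfolding jb_def by (simp add: add_pos_nonneg)

lemma isCont_jb: "isCont jb x"
  unfolding jb_def by (intro continuous_intros)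

(* For 1 \<le> a \<le> b the relative distance (b - a)/a is controlled by the squared ratio of
   brackets; this turns a bound on products of bracket ratios into summability. *)
lemma relative_gap_le_jb_ratio:
  assumes "1 \<le> a" "a \<le> b"
  shows "1 + (b - a) / a \<le> (jb b / jb a)\<^sup>2"
proof -
  have "1 \<le> a * b" using assms mult_mono[of 1 a 1 b] by simp
  then have "b - a \<le> a * b * (b - a)"
    using mult_right_mono[of 1 "a * b" "b - a"] assms by simp
  then have "b * (1 + a\<^sup>2) \<le> a * (1 + b\<^sup>2)"
    by (simp add: algebra_simps power2_eq_square)
  then have "b / a \<le> (1 + b\<^sup>2) / (1 + a\<^sup>2)"
    using assms \<open>1 \<le> a * b\<close> by (simp add: field_simps add_pos_nonneg)
  moreover have "1 + (b - a) / a = b / a" using assms by (simp add: field_simps)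
  ultimately show ?thesis by (simp add: power_divide jb_squared)
qed

(* Nonnegative terms whose finite products of 1 + u x are uniformly bounded are summable,
   since a sum is dominated by the corresponding product. *)
lemma summable_on_if_prod_bounded:
  fixes u :: "'a \<Rightarrow> real"
  assumes nonneg: "\<And>x. x \<in> X \<Longrightarrow> 0 \<le> u x"
    and bounded: "\<And>S. finite S \<Longrightarrow> S \<subseteq> X \<Longrightarrow> (\<Prod>x\<in>S. 1 + u x) \<le> K"
  shows "u summable_on X"
proof (rule nonneg_bdd_above_summable_on)
  show "bdd_above (sum u ` {S. S \<subseteq> X \<and> finite S})"
  proof (rule bdd_aboveI2)
    fix S assume "S \<in> {S. S \<subseteq> X \<and> finite S}"
    then show "sum u S \<le> K"
      using sum_le_prod[of S u] bounded[of S] nonneg by force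
  qed
qed (use nonneg in blast)

lemma partial_fractions_common_denominator:
  fixes c m :: "'i \<Rightarrow> 'a::field"
  assumes "finite I" "\<And>j. j \<in> I \<Longrightarrow> z \<noteq> c j"
  shows "(\<Prod>j\<in>I. z - c j) * (\<Sum>k\<in>I. m k / (z - c k)) = (\<Sum>k\<in>I. m k * (\<Prod>j\<in>I - {k}. z - c j))"
  unfolding sum_distrib_left
proof (rule sum.cong)
  fix k assume k: "k \<in> I"
  have "(\<Prod>j\<in>I. z - c j) = (z - c k) * (\<Prod>j\<in>I - {k}. z - c j)"
    using k assms(1) by (simp add: prod.remove)
  then show "(\<Prod>j\<in>I. z - c j) * (m k / (z - c k)) = m k * (\<Prod>j\<in>I - {k}. z - c j)"
    using assms(2)[OF k] by simp
qed simp

lemma monic_linear_factors: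
  fixes c :: "'i \<Rightarrow> 'a::idom"
  assumes "finite J"
  shows "degree (\<Prod>j\<in>J. [:- c j, 1:]) = card J" and "coeff (\<Prod>j\<in>J. [:- c j, 1:]) (card J) = 1"
proof -
  show deg: "degree (\<Prod>j\<in>J. [:- c j, 1:]) = card J"
    by (subst degree_prod_sum_eq) auto
  have "lead_coeff (\<Prod>j\<in>J. [:- c j, 1:]) = 1"
    by (simp add: lead_coeff_prod)
  then show "coeff (\<Prod>j\<in>J. [:- c j, 1:]) (card J) = 1"
    using deg by simp
qed

lemma poly_eq_from_roots:
  fixes p :: "'a::idom poly"
  assumes "finite Z" "degree p \<le> card Z" "\<And>z. z \<in> Z \<Longrightarrow> poly p z = 0"
  shows "p = smult (coeff p (card Z)) (\<Prod>z\<in>Z. [:- z, 1:])"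
proof (rule poly_eqI_degree_lead_coeff[where A = Z and n = "card Z"])
  show "coeff p (card Z) = coeff (smult (coeff p (card Z)) (\<Prod>z\<in>Z. [:- z, 1:])) (card Z)"
    using monic_linear_factors(2)[OF assms(1), of "\<lambda>z. z"] by simp
  show "degree (smult (coeff p (card Z)) (\<Prod>z\<in>Z. [:- z, 1:])) \<le> card Z"
    using monic_linear_factors(1)[OF assms(1), of "\<lambda>z. z"] degree_smult_le by metis
qed (use assms in \<open>auto simp: poly_prod\<close>)

lemma partial_fraction_numerator:
  fixes c m :: "'i \<Rightarrow> 'a::idom"
  assumes "finite I"
  defines "N \<equiv> (\<Sum>k\<in>I. smult (m k) (\<Prod>j\<in>I - {k}. [:- c j, 1:]))"
  shows "degree N \<le> card I - 1" and "coeff N (card I - 1) = sum m I"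
    and "poly N z = (\<Sum>k\<in>I. m k * (\<Prod>j\<in>I - {k}. z - c j))"
proof -
  have factor: "degree (\<Prod>j\<in>I - {k}. [:- c j, 1:]) = card I - 1"
      "coeff (\<Prod>j\<in>I - {k}. [:- c j, 1:]) (card I - 1) = 1" if "k \<in> I" for k
    using monic_linear_factors[of "I - {k}" c] assms(1) that by (simp_all add: card_Diff_singleton)
  show "degree N \<le> card I - 1"
    unfolding N_def
  proof (rule degree_sum_le[OF assms(1)])
    fix k assume "k \<in> I"
    show "degree (smult (m k) (\<Prod>j\<in>I - {k}. [:- c j, 1:])) \<le> card I - 1"
      using degree_smult_le[of "m k" "\<Prod>j\<in>I - {k}. [:- c j, 1:]"] factor(1)[OF \<open>k \<in> I\<close>] by simp
  qed
  show "coeff N (card I - 1) = sum m I"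
    unfolding N_def coeff_sum
  proof (rule sum.cong)
    fix k assume "k \<in> I"
    then show "coeff (smult (m k) (\<Prod>j\<in>I - {k}. [:- c j, 1:])) (card I - 1) = m k"
      using factor(2)[OF \<open>k \<in> I\<close>] by simp
  qed simp
  show "poly N z = (\<Sum>k\<in>I. m k * (\<Prod>j\<in>I - {k}. z - c j))"
    by (simp add: N_def poly_sum poly_prod)
qed

(* Lower bound for a finite Cauchy sum with nonnegative masses, evaluated at i: all
   imaginary parts have the same sign, so any single term bounds the modulus from below. *)
lemma cmod_cauchy_sum_at_i:
  fixes t \<mu> :: "'i \<Rightarrow> real"
  assumes "finite I" "j \<in> I" "\<And>k. k \<in> I \<Longrightarrow> 0 \<le> \<mu> k"
  shows "\<mu> j / (1 + (t j)\<^sup>2) \<le> cmod (\<Sum>k\<in>I. complex_of_real (\<mu> k) / (\<i> - complex_of_real (t k)))"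
proof -
  have Im_term: "Im (complex_of_real (\<mu> k) / (\<i> - complex_of_real (t k))) = - (\<mu> k / (1 + (t k)\<^sup>2))" for k
    by (simp add: Im_divide power2_eq_square)
  have nonneg: "0 \<le> \<mu> k / (1 + (t k)\<^sup>2)" if "k \<in> I" for k
    using assms(3)[OF that] by (simp add: add_pos_nonneg)
  have "\<mu> j / (1 + (t j)\<^sup>2) \<le> (\<Sum>k\<in>I. \<mu> k / (1 + (t k)\<^sup>2))"
    by (rule member_le_sum) (use assms nonneg in auto)
  also have "\<dots> = \<bar>Im (\<Sum>k\<in>I. complex_of_real (\<mu> k) / (\<i> - complex_of_real (t k)))\<bar>"
    using nonneg by (simp add: Im_sum Im_term sum_negf sum_nonneg)
  also have "\<dots> \<le> cmod (\<Sum>k\<in>I. complex_of_real (\<mu> k) / (\<i> - complex_of_real (t k)))"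
    by (rule abs_Im_le_cmod)
  finally show ?thesis .
qed

lemma eventually_subset_symmetric_interval:
  assumes "finite S"
  shows "\<forall>\<^sub>F N in sequentially. S \<subseteq> {- int N..<int N}"
proof -
  define B where "B = (\<Sum>x\<in>S. \<bar>x\<bar>)"
  have B: "\<bar>x\<bar> \<le> B" if "x \<in> S" for x
    unfolding B_def using assms that by (intro member_le_sum) auto
  show ?thesis
    unfolding eventually_sequentially
    by (rule exI[of _ "nat B + 1"]) (fastforce dest: B)
qed

(* Hence the windows {-N..N} are cofinal among finite subsets of the integers, so
   unconditional sums over the integers are limits of symmetric partial sums. *)
lemma symmetric_intervals_exhaust:
  "filterlim (\<lambda>N::nat. {- int N..int N}) (finite_subsets_at_top UNIV) sequentially"
proof (subst filterlim_finite_subsets_at_top, safe)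
  fix X :: "int set" assume "finite X"
  then show "\<forall>\<^sub>F N in sequentially. finite {- int N..int N} \<and> X \<subseteq> {- int N..int N} \<and> {- int N..int N} \<subseteq> UNIV"
    by (rule eventually_mono[OF eventually_subset_symmetric_interval]) auto
qed

lemma zeros_of_antitone_approximants:
  fixes f :: "real \<Rightarrow> real" and g :: "'i \<Rightarrow> real \<Rightarrow> real" and r :: "'i \<Rightarrow> real"
  assumes s: "a < s" "s < b" "f s = 0"
    and f_dec: "\<And>x y. a < x \<Longrightarrow> x < y \<Longrightarrow> y < b \<Longrightarrow> f y < f x"
    and g_lim: "\<And>x. a < x \<Longrightarrow> x < b \<Longrightarrow> ((\<lambda>N. g N x) \<longlongrightarrow> f x) F"
    and g_dec: "\<And>N x y. a < x \<Longrightarrow> x \<le> y \<Longrightarrow> y < b \<Longrightarrow> g N y \<le> g N x"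
    and r: "\<forall>\<^sub>F N in F. a < r N \<and> r N < b \<and> g N (r N) = 0"
  shows "(r \<longlongrightarrow> s) F"
proof (rule tendstoI)
  fix e :: real assume "0 < e"
  define m where "m = min e (min (s - a) (b - s))"
  have "0 < m" "m \<le> e" "m \<le> s - a" "m \<le> b - s"
    using \<open>0 < e\<close> s by (auto simp: m_def)
  define d where "d = m / 2"
  then have d: "0 < d" "d < e" "a < s - d" "s + d < b"
    using \<open>0 < m\<close> \<open>m \<le> e\<close> \<open>m \<le> s - a\<close> \<open>m \<le> b - s\<close> by linarith+
  have "0 < f (s - d)" "f (s + d) < 0"
    using f_dec[of "s - d" s] f_dec[of s "s + d"] s d by auto
  then have "\<forall>\<^sub>F N in F. 0 < g N (s - d)" "\<forall>\<^sub>F N in F. g N (s + d) < 0"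
    using g_lim[of "s - d"] g_lim[of "s + d"] d s
    by (auto intro: order_tendstoD)
  with r show "\<forall>\<^sub>F N in F. dist (r N) s < e"
  proof eventually_elim
    case (elim N)
    have "s - d < r N"
      using g_dec[of "r N" "s - d" N] elim d by (cases "s - d < r N") auto
    moreover have "r N < s + d"
      using g_dec[of "s + d" "r N" N] elim d by (cases "r N < s + d") auto
    ultimately show ?case using d by (simp add: dist_real_def abs_less_iff)
  qed
qed

(* The outer endpoint of a gap depends only on the sign of the point, so it is eventually
   constant along a sequence converging to a nonzero limit. *)
lemma eventually_outer_end_eq:
  assumes "(f \<longlongrightarrow> x) F" "x \<noteq> 0"
  shows "\<forall>\<^sub>F N in F. outer_end (f N) m = outer_end x m"
proof (cases "0 < x")
  case True
  from order_tendstoD(1)[OF assms(1) this] show ?thesis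
    by (rule eventually_mono) (use True in \<open>simp add: outer_end_def\<close>)
next
  case False
  then have "x < 0" using assms(2) by linarith
  from order_tendstoD(2)[OF assms(1) this] show ?thesis
    by (rule eventually_mono) (use \<open>x < 0\<close> in \<open>simp add: outer_end_def\<close>)
qed

context
  fixes t :: "int \<Rightarrow> real"
  assumes t_mono: "strict_mono t"
begin

lemma gap_position:
  assumes "t n < x" "x < t (n + 1)"
  shows "k \<le> n \<Longrightarrow> t k < x" and "n < k \<Longrightarrow> x < t k"
proof -
  show "t k < x" if "k \<le> n"
  proof -
    have "t k \<le> t n" using that t_mono by (simp add: strict_mono_less_eq)
    then show ?thesis using assms by linarith
  qed
  show "x < t k" if "n < k"
  proof -
    have "t (n + 1) \<le> t k" using that t_mono by (simp add: strict_mono_less_eq)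
    then show ?thesis using assms by linarith
  qed
qed

lemma gap_avoids_poles: "t n < x \<Longrightarrow> x < t (n + 1) \<Longrightarrow> x \<noteq> t k"
  using gap_position[of n x k] by (cases "k \<le> n") auto

lemma gap_distance:
  assumes "t n < x" "x < t (n + 1)"
  shows "min (x - t n) (t (n + 1) - x) \<le> \<bar>x - t k\<bar>"
proof (cases "k \<le> n")
  case True
  then have "t k \<le> t n" using t_mono by (simp add: strict_mono_less_eq)
  then show ?thesis using assms by auto
next
  case False
  then have "t (n + 1) \<le> t k" using t_mono by (simp add: strict_mono_less_eq)
  then show ?thesis using assms by auto
qed

lemma gap_term_decreasing:
  assumes "0 < m" "t n < x" "x < y" "y < t (n + 1)"
  shows "m / (y - t k) < m / (x - t k)"
proof -
  have "0 < (x - t k) * (y - t k)"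
    using gap_position[of n x k] gap_position[of n y k] assms
    by (cases "k \<le> n") (auto intro: mult_pos_pos mult_neg_neg)
  then show ?thesis using assms by (intro divide_strict_left_mono) (auto simp: mult.commute)
qed

lemma gaps_ordered:
  assumes "t n < x" "x < t (n + 1)" "t n' < x'" "x' < t (n' + 1)" "n < n'"
  shows "x < x'"
proof -
  have "t (n + 1) \<le> t n'" using assms(5) t_mono by (simp add: strict_mono_less_eq)
  then show ?thesis using assms by linarith
qed

lemma gap_outer_end:
  assumes "t n < x" "x < t (n + 1)"
  shows "\<bar>x\<bar> \<le> \<bar>t (outer_end x n)\<bar>"
    and "\<bar>t (outer_end x n) - x\<bar> = \<bar>t (outer_end x n)\<bar> - \<bar>x\<bar>"
  using assms by (auto simp: outer_end_def)

lemma jb_outer_end: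
  assumes "t n < x" "x < t (n + 1)"
  shows "jb x \<le> jb (t (outer_end x n))"
  using gap_outer_end(1)[OF assms] by (rule jb_mono)

lemma relative_gap_le_bracket_ratio:
  assumes "t n < x" "x < t (n + 1)" "1 \<le> \<bar>x\<bar>"
  shows "1 + \<bar>t (outer_end x n) - x\<bar> / \<bar>x\<bar> \<le> (jb (t (outer_end x n)) / jb x)\<^sup>2"
  using relative_gap_le_jb_ratio[of "\<bar>x\<bar>" "\<bar>t (outer_end x n)\<bar>"] gap_outer_end[OF assms(1,2)] assms(3)
  by (simp add: jb_abs)

lemma finitely_many_gaps_near_origin:
  assumes t_top: "filterlim t at_top at_top" and t_bot: "filterlim t at_bot at_bot"
    and x_in: "\<And>n. t n < x n \<and> x n < t (n + 1)"
  shows "finite {n. \<bar>x n\<bar> < R}"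
proof -
  obtain N1 where N1: "\<And>n. N1 \<le> n \<Longrightarrow> R \<le> t n"
    using t_top unfolding filterlim_at_top eventually_at_top_linorder by blast
  obtain N0 where N0: "\<And>n. n \<le> N0 \<Longrightarrow> t n \<le> - R"
    using t_bot unfolding filterlim_at_bot eventually_at_bot_linorder by blast
  have "{n. \<bar>x n\<bar> < R} \<subseteq> {N0..N1}"
  proof
    fix n assume "n \<in> {n. \<bar>x n\<bar> < R}"
    then have "\<not> n + 1 \<le> N0" "\<not> N1 \<le> n"
      using N0[of "n + 1"] N1[of n] x_in[of n] by auto
    then show "n \<in> {N0..N1}" by simp
  qed
  then show ?thesis by (rule finite_subset) simp
qed

(* Finite version of the factorisation of B: if the truncated Cauchy sum over {a..b} has
   the zeros r n in the b - a interior gaps, then its numerator over the common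
   denominator is the total mass times the monic polynomial with roots r n, since it has
   degree \<le> b - a, the total mass as coefficient of degree b - a, and the b - a distinct
   roots r n. *)
lemma cauchy_numerator_factorization:
  fixes \<mu> r :: "int \<Rightarrow> real" and z :: complex
  assumes "a \<le> b"
    and r_in: "\<And>n. n \<in> {a..<b} \<Longrightarrow> t n < r n \<and> r n < t (n + 1)"
    and r_zero: "\<And>n. n \<in> {a..<b} \<Longrightarrow> cauchy_sum t \<mu> {a..b} (r n) = 0"
  shows "(\<Sum>k\<in>{a..b}. of_real (\<mu> k) * (\<Prod>j\<in>{a..b} - {k}. z - of_real (t j)))
       = of_real (sum \<mu> {a..b}) * (\<Prod>n\<in>{a..<b}. z - of_real (r n))"
proof -
  define I where "I = {a..b}"
  define Z where "Z = (\<lambda>n. complex_of_real (r n)) ` {a..<b}"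
  define N :: "complex poly" where
    "N = (\<Sum>k\<in>I. smult (of_real (\<mu> k)) (\<Prod>j\<in>I - {k}. [:- of_real (t j), 1:]))"
  have finite_I: "finite I" by (simp add: I_def)
  have inj: "inj_on (\<lambda>n. complex_of_real (r n)) {a..<b}"
  proof (rule linorder_inj_onI')
    fix i j assume "i \<in> {a..<b}" "j \<in> {a..<b}" "i < j"
    then show "complex_of_real (r i) \<noteq> complex_of_real (r j)"
      using gaps_ordered[of i "r i" j "r j"] r_in by (metis less_irrefl of_real_eq_iff)
  qed
  have card_Z: "card Z = card I - 1"
    using \<open>a \<le> b\<close> by (simp add: Z_def I_def card_image[OF inj])
  have roots: "poly N w = 0" if w_root: "w \<in> Z" for w
  proof -
    obtain n where n: "n \<in> {a..<b}" and w: "w = of_real (r n)" using w_root by (auto simp: Z_def)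
    have "poly N w = (\<Prod>j\<in>I. w - of_real (t j)) * (\<Sum>k\<in>I. of_real (\<mu> k) / (w - of_real (t k)))"
      unfolding N_def partial_fraction_numerator(3)[OF finite_I]
      by (rule partial_fractions_common_denominator[symmetric])
         (use gap_avoids_poles r_in[OF n] in \<open>auto simp: I_def w\<close>)
    also have "(\<Sum>k\<in>I. of_real (\<mu> k) / (w - of_real (t k))) = of_real (cauchy_sum t \<mu> I (r n))"
      by (simp add: cauchy_sum_def w)
    also have "cauchy_sum t \<mu> I (r n) = 0"
      using r_zero[OF n] by (simp add: I_def)
    finally show ?thesis by simp
  qed
  have N_factored: "N = smult (coeff N (card Z)) (\<Prod>w\<in>Z. [:- w, 1:])"
  proof (rule poly_eq_from_roots)
    show "finite Z" by (simp add: Z_def)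
    show "degree N \<le> card Z"
      unfolding card_Z N_def by (rule partial_fraction_numerator(1)[OF finite_I])
  qed (rule roots)
  have top_coeff: "coeff N (card Z) = of_real (sum \<mu> I)"
    unfolding card_Z N_def of_real_sum by (rule partial_fraction_numerator(2)[OF finite_I])
  have "(\<Sum>k\<in>I. of_real (\<mu> k) * (\<Prod>j\<in>I - {k}. z - of_real (t j))) = poly N z"
    unfolding N_def by (rule partial_fraction_numerator(3)[OF finite_I, symmetric])
  also have "\<dots> = of_real (sum \<mu> I) * (\<Prod>w\<in>Z. z - w)"
    by (subst N_factored) (simp add: top_coeff poly_prod)
  also have "(\<Prod>w\<in>Z. z - w) = (\<Prod>n\<in>{a..<b}. z - of_real (r n))"
    by (simp add: Z_def prod.reindex[OF inj])
  finally show ?thesis unfolding I_def .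
qed

(* The outer endpoints of distinct gaps are distinct (two neighbouring gaps could only share
   their common endpoint if the zero of the left one were \<ge> 0 and that of the right one
   < 0), so their brackets multiply to at most the product over all poles. *)
lemma outer_end_prod_le:
  assumes r_in: "\<And>n. n \<in> {a..<b} \<Longrightarrow> t n < r n \<and> r n < t (n + 1)"
  shows "(\<Prod>n\<in>{a..<b}. jb (t (outer_end (r n) n))) \<le> (\<Prod>k\<in>{a..b}. jb (t k))"
proof -
  have "inj_on (\<lambda>n. outer_end (r n) n) {a..<b}"
  proof (rule linorder_inj_onI')
    fix i j assume ij: "i \<in> {a..<b}" "j \<in> {a..<b}" "i < j"
    have "r i < r j" using gaps_ordered[of i "r i" j "r j"] r_in ij by blast
    then show "outer_end (r i) i \<noteq> outer_end (r j) j"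
      using ij by (auto simp: outer_end_def)
  qed
  then have "(\<Prod>n\<in>{a..<b}. jb (t (outer_end (r n) n))) = (\<Prod>k\<in>(\<lambda>n. outer_end (r n) n) ` {a..<b}. jb (t k))"
    by (simp add: prod.reindex)
  also have "\<dots> \<le> (\<Prod>k\<in>{a..b}. jb (t k))"
    by (rule prod_mono2) (auto simp: outer_end_def jb_ge_1 intro: order.trans[OF zero_le_one jb_ge_1])
  finally show ?thesis .
qed

context
  fixes \<mu> :: "int \<Rightarrow> real"
  assumes \<mu>_pos: "\<And>k. 0 < \<mu> k"
begin

lemma cauchy_sum_pole_sign:
  assumes I: "finite I" "n \<in> I"
  shows "\<forall>\<^sub>F x in at (t n). 0 < (x - t n) * cauchy_sum t \<mu> I x"
proof -
  define H where "H x = \<mu> n + (x - t n) * (\<Sum>k\<in>I - {n}. \<mu> k / (x - t k))" for x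
  have "t n \<noteq> t k" if "k \<noteq> n" for k
    using that by (simp add: strict_mono_eq[OF t_mono])
  then have "isCont H (t n)"
    unfolding H_def by (intro continuous_intros) auto
  then have "(H \<longlongrightarrow> \<mu> n) (at (t n))"
    by (simp add: isCont_def H_def)
  then have "\<forall>\<^sub>F x in at (t n). 0 < H x"
    using \<mu>_pos[of n] by (rule order_tendstoD(1))
  moreover have "\<forall>\<^sub>F x in at (t n). x \<noteq> t n"
    by (simp add: eventually_neq_at_within)
  ultimately show ?thesis
  proof eventually_elim
    case (elim x)
    then have "(x - t n) * cauchy_sum t \<mu> I x = H x"
      using I by (simp add: cauchy_sum_def H_def sum.remove field_simps)
    then show ?case using elim by simp
  qed
qed

lemma cauchy_sum_antitone_in_gap:
  assumes "t n < x" "x \<le> y" "y < t (n + 1)"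
  shows "cauchy_sum t \<mu> I y \<le> cauchy_sum t \<mu> I x"
proof (cases "x = y")
  case False
  then show ?thesis
    using gap_term_decreasing[OF \<mu>_pos] assms
    unfolding cauchy_sum_def by (intro sum_mono less_imp_le) auto
qed simp

lemma cauchy_sum_positive_in_gap:
  assumes I: "finite I" "n \<in> I"
  obtains x where "t n < x" "x < t (n + 1)" "0 < cauchy_sum t \<mu> I x"
proof -
  have "\<forall>\<^sub>F x in at_right (t n). 0 < (x - t n) * cauchy_sum t \<mu> I x"
    using cauchy_sum_pole_sign[OF I] by (rule eventually_at_split[THEN iffD1, THEN conjunct2])
  moreover have "\<forall>\<^sub>F x in at_right (t n). t n < x \<and> x < t (n + 1)"
    unfolding eventually_at_right_field using t_mono
    by (intro exI[of _ "t (n + 1)"]) (simp add: strict_mono_less)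
  ultimately have ev: "\<forall>\<^sub>F x in at_right (t n). t n < x \<and> x < t (n + 1) \<and> 0 < cauchy_sum t \<mu> I x"
    by eventually_elim (simp add: zero_less_mult_iff)
  show ?thesis
    using eventually_happens[OF ev] that by auto
qed

lemma cauchy_sum_negative_in_gap:
  assumes I: "finite I" "n + 1 \<in> I"
  obtains y where "t n < y" "y < t (n + 1)" "cauchy_sum t \<mu> I y < 0"
proof -
  have "\<forall>\<^sub>F x in at_left (t (n + 1)). 0 < (x - t (n + 1)) * cauchy_sum t \<mu> I x"
    using cauchy_sum_pole_sign[OF I] by (rule eventually_at_split[THEN iffD1, THEN conjunct1])
  moreover have "\<forall>\<^sub>F x in at_left (t (n + 1)). t n < x \<and> x < t (n + 1)"
    unfolding eventually_at_left_field using t_mono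
    by (intro exI[of _ "t n"]) (simp add: strict_mono_less)
  ultimately have ev: "\<forall>\<^sub>F x in at_left (t (n + 1)). t n < x \<and> x < t (n + 1) \<and> cauchy_sum t \<mu> I x < 0"
    by eventually_elim (simp add: zero_less_mult_iff)
  show ?thesis
    using eventually_happens[OF ev] that by auto
qed

lemma cauchy_sum_zero_in_gap:
  assumes I: "finite I" "n \<in> I" "n + 1 \<in> I"
  obtains r where "t n < r" "r < t (n + 1)" "cauchy_sum t \<mu> I r = 0"
proof -
  define G where "G = cauchy_sum t \<mu> I"
  obtain x0 where x0: "t n < x0" "x0 < t (n + 1)" "0 < G x0"
    using cauchy_sum_positive_in_gap[OF I(1,2)] unfolding G_def by blast
  obtain y0 where y0: "t n < y0" "y0 < t (n + 1)" "G y0 < 0"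
    using cauchy_sum_negative_in_gap[OF I(1,3)] unfolding G_def by blast
  have "x0 \<le> y0"
  proof (rule ccontr)
    assume "\<not> x0 \<le> y0"
    then have "G x0 \<le> G y0"
      using cauchy_sum_antitone_in_gap[of n y0 x0 I] x0 y0 by (simp add: G_def)
    then show False using x0 y0 by simp
  qed
  moreover have "continuous_on {x0..y0} G"
    unfolding G_def cauchy_sum_def
  proof (intro continuous_intros ballI)
    fix x k assume "x \<in> {x0..y0}"
    then show "x - t k \<noteq> 0"
      using gap_avoids_poles[of n x k] x0 y0 by auto
  qed
  ultimately obtain r where r: "x0 \<le> r" "r \<le> y0" "G r = 0"
    using IVT2'[of G y0 0 x0] x0 y0 by auto
  show ?thesis
    by (rule that[of r]) (use r x0 y0 in \<open>auto simp: G_def\<close>)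
qed

lemma truncated_zeros_exist:
  obtains r where "\<And>N n. n \<in> {- int N..<int N} \<Longrightarrow>
      t n < r N n \<and> r N n < t (n + 1) \<and> cauchy_sum t \<mu> {- int N..int N} (r N n) = 0"
proof -
  define r where
    "r N n = (SOME y. t n < y \<and> y < t (n + 1) \<and> cauchy_sum t \<mu> {- int N..int N} y = 0)" for N n
  have "t n < r N n \<and> r N n < t (n + 1) \<and> cauchy_sum t \<mu> {- int N..int N} (r N n) = 0"
    if n_in: "n \<in> {- int N..<int N}" for N n
  proof -
    obtain y where "t n < y" "y < t (n + 1)" "cauchy_sum t \<mu> {- int N..int N} y = 0"
      by (rule cauchy_sum_zero_in_gap[of "{- int N..int N}" n]) (use n_in in auto)
    then have "\<exists>y. t n < y \<and> y < t (n + 1) \<and> cauchy_sum t \<mu> {- int N..int N} y = 0" by blast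
    then show ?thesis
      unfolding r_def by (rule someI_ex)
  qed
  then show ?thesis by (rule that)
qed

(* Evaluating the factorisation at i and taking moduli: the truncated Cauchy sum F over
   {a..b} satisfies |F(i)| * \<Prod> jb (t k) = M * \<Prod> jb (r n), M the truncated total mass. *)
lemma cauchy_sum_modulus_at_i:
  assumes "a \<le> b"
    and r_in: "\<And>n. n \<in> {a..<b} \<Longrightarrow> t n < r n \<and> r n < t (n + 1)"
    and r_zero: "\<And>n. n \<in> {a..<b} \<Longrightarrow> cauchy_sum t \<mu> {a..b} (r n) = 0"
  shows "cmod (\<Sum>k\<in>{a..b}. complex_of_real (\<mu> k) / (\<i> - of_real (t k))) * (\<Prod>k\<in>{a..b}. jb (t k))
       = sum \<mu> {a..b} * (\<Prod>n\<in>{a..<b}. jb (r n))"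
proof -
  define F where "F = (\<Sum>k\<in>{a..b}. complex_of_real (\<mu> k) / (\<i> - of_real (t k)))"
  have "(\<Prod>k\<in>{a..b}. \<i> - of_real (t k)) * F
      = (\<Sum>k\<in>{a..b}. of_real (\<mu> k) * (\<Prod>j\<in>{a..b} - {k}. \<i> - of_real (t j)))"
    unfolding F_def by (rule partial_fractions_common_denominator) (auto simp: complex_eq_iff)
  also have "\<dots> = of_real (sum \<mu> {a..b}) * (\<Prod>n\<in>{a..<b}. \<i> - of_real (r n))"
    using assms by (rule cauchy_numerator_factorization)
  finally have "cmod ((\<Prod>k\<in>{a..b}. \<i> - of_real (t k)) * F)
      = cmod (of_real (sum \<mu> {a..b}) * (\<Prod>n\<in>{a..<b}. \<i> - of_real (r n)))"
    by (rule arg_cong)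
  moreover have "0 \<le> sum \<mu> {a..b}"
    using \<mu>_pos by (intro sum_nonneg) (simp add: less_imp_le)
  ultimately show ?thesis
    unfolding F_def[symmetric]
    by (simp add: norm_mult prod_norm[symmetric] cmod_i_minus_real mult.commute del: of_real_sum)
qed

(* By the previous lemma and the lower bound
   |F(i)| \<ge> \<mu> j / (1 + (t j)\<^sup>2), the product of the ratios jb (t (outer_end ..)) / jb (r n),
   each of which is \<ge> 1, is bounded independently of the truncation window, because the
   outer endpoints are distinct poles. *)
lemma truncated_product_bound:
  assumes j: "j \<in> {a..b}" and S: "S \<subseteq> {a..<b}"
    and r_in: "\<And>n. n \<in> {a..<b} \<Longrightarrow> t n < r n \<and> r n < t (n + 1)"
    and r_zero: "\<And>n. n \<in> {a..<b} \<Longrightarrow> cauchy_sum t \<mu> {a..b} (r n) = 0"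
  shows "(\<Prod>n\<in>S. jb (t (outer_end (r n) n)) / jb (r n)) \<le> sum \<mu> {a..b} * (1 + (t j)\<^sup>2) / \<mu> j"
proof -
  define F where "F = (\<Sum>k\<in>{a..b}. complex_of_real (\<mu> k) / (\<i> - of_real (t k)))"
  define c where "c = \<mu> j / (1 + (t j)\<^sup>2)"
  have c_pos: "0 < c" using \<mu>_pos[of j] by (simp add: c_def add_pos_nonneg)
  have c_le: "c \<le> cmod F"
    unfolding c_def F_def using j \<mu>_pos less_imp_le by (intro cmod_cauchy_sum_at_i) auto
  have "(\<Prod>n\<in>S. jb (t (outer_end (r n) n)) / jb (r n))
      \<le> (\<Prod>n\<in>{a..<b}. jb (t (outer_end (r n) n)) / jb (r n))"
    using S r_in jb_outer_end jb_pos
    by (intro prod_mono2) (auto simp: less_imp_le)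
  also have "\<dots> = (\<Prod>n\<in>{a..<b}. jb (t (outer_end (r n) n))) / (\<Prod>n\<in>{a..<b}. jb (r n))"
    by (rule prod_dividef)
  also have "\<dots> \<le> (\<Prod>k\<in>{a..b}. jb (t k)) / (\<Prod>n\<in>{a..<b}. jb (r n))"
    using outer_end_prod_le[OF r_in] jb_pos by (intro divide_right_mono prod_nonneg) (auto simp: less_imp_le)
  also have "\<dots> = sum \<mu> {a..b} / cmod F"
    using cauchy_sum_modulus_at_i[OF _ r_in r_zero] j c_pos c_le
      prod_pos[of "{a..<b}" "\<lambda>n. jb (r n)"] jb_pos
    by (subst frac_eq_eq) (auto simp: F_def mult.commute jb_nonzero)
  also have "\<dots> \<le> sum \<mu> {a..b} / c"
    using c_pos c_le \<mu>_pos by (intro divide_left_mono sum_nonneg mult_pos_pos) (auto simp: less_imp_le)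
  finally show ?thesis by (simp add: c_def)
qed

context
  assumes \<mu>_sum: "\<mu> summable_on UNIV"
begin

(* On a gap the series defining the Cauchy transform converges absolutely, since its terms
   are dominated by \<mu> k divided by the distance to the nearer endpoint. *)
lemma transform_has_sum:
  assumes x: "t n < x" "x < t (n + 1)"
  shows "((\<lambda>k. \<mu> k / (x - t k)) has_sum cauchy_transform t \<mu> x) UNIV"
proof -
  define d where "d = min (x - t n) (t (n + 1) - x)"
  have "0 < d" using x by (simp add: d_def)
  have "(\<lambda>k. \<mu> k * (1 / d)) summable_on UNIV"
    using \<mu>_sum by (rule summable_on_cmult_left)
  then have "(\<lambda>k. norm (\<mu> k / (x - t k))) summable_on UNIV"
  proof (rule summable_on_comparison_test)
    fix k
    have "d \<le> \<bar>x - t k\<bar>" using gap_distance[OF x] by (simp add: d_def)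
    then show "norm (\<mu> k / (x - t k)) \<le> \<mu> k * (1 / d)"
      using \<mu>_pos[of k] \<open>0 < d\<close> by (simp add: abs_divide divide_left_mono)
  qed simp
  then have "(\<lambda>k. \<mu> k / (x - t k)) summable_on UNIV"
    by (rule abs_summable_summable)
  then show ?thesis
    unfolding cauchy_transform_def by (rule has_sum_infsum)
qed

lemma transform_strictly_decreasing:
  assumes "t n < x" "x < y" "y < t (n + 1)"
  shows "cauchy_transform t \<mu> y < cauchy_transform t \<mu> x"
proof (rule has_sum_strict_mono)
  show "((\<lambda>k. \<mu> k / (y - t k)) has_sum cauchy_transform t \<mu> y) UNIV"
    using assms by (intro transform_has_sum) auto
  show "((\<lambda>k. \<mu> k / (x - t k)) has_sum cauchy_transform t \<mu> x) UNIV"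
    using assms by (intro transform_has_sum) auto
  show "\<mu> k / (y - t k) \<le> \<mu> k / (x - t k)" for k
    using gap_term_decreasing[OF \<mu>_pos assms] by (rule less_imp_le)
  show "\<mu> n / (y - t n) < \<mu> n / (x - t n)"
    using gap_term_decreasing[OF \<mu>_pos assms] .
qed simp

lemma truncations_tendsto:
  assumes "t n < x" "x < t (n + 1)"
  shows "(\<lambda>N. cauchy_sum t \<mu> {- int N..int N} x) \<longlonglongrightarrow> cauchy_transform t \<mu> x"
proof -
  have "(sum (\<lambda>k. \<mu> k / (x - t k)) \<longlongrightarrow> cauchy_transform t \<mu> x) (finite_subsets_at_top UNIV)"
    using transform_has_sum[OF assms] by (simp add: has_sum_def)
  from filterlim_compose[OF this symmetric_intervals_exhaust]
  show ?thesis by (simp add: cauchy_sum_def o_def)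
qed

lemma transform_vanishes_at_zeros_of_quotient:
  fixes A B :: "complex \<Rightarrow> complex"
  assumes B_div_A: "\<And>z. z \<notin> complex_of_real ` range t \<Longrightarrow>
        B z / A z = (\<Sum>\<^sub>\<infinity>n. complex_of_real (\<mu> n) / (z - complex_of_real (t n)))"
    and x: "t n < x" "x < t (n + 1)" and B_zero: "B (complex_of_real x) = 0"
  shows "cauchy_transform t \<mu> x = 0"
proof -
  have "complex_of_real x \<notin> complex_of_real ` range t"
    using gap_avoids_poles[OF x] by auto
  then have "0 = (\<Sum>\<^sub>\<infinity>k. complex_of_real (\<mu> k) / (complex_of_real x - complex_of_real (t k)))"
    using B_div_A[of "complex_of_real x"] B_zero by simp
  also have "\<dots> = (\<Sum>\<^sub>\<infinity>k. complex_of_real (\<mu> k / (x - t k)))"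
    by simp
  also have "\<dots> = complex_of_real (cauchy_transform t \<mu> x)"
    by (intro infsumI has_sum_of_real transform_has_sum[OF x])
  finally show ?thesis by simp
qed

lemma truncated_zeros_tendsto:
  assumes r: "\<And>N n. n \<in> {- int N..<int N} \<Longrightarrow>
      t n < r N n \<and> r N n < t (n + 1) \<and> cauchy_sum t \<mu> {- int N..int N} (r N n) = 0"
    and s: "t n < s" "s < t (n + 1)" "cauchy_transform t \<mu> s = 0"
  shows "(\<lambda>N. r N n) \<longlonglongrightarrow> s"
proof (rule zeros_of_antitone_approximants[where f = "cauchy_transform t \<mu>"
      and g = "\<lambda>N. cauchy_sum t \<mu> {- int N..int N}" and a = "t n" and b = "t (n + 1)"
      and r = "\<lambda>N. r N n" and s = s and F = sequentially])
  show "cauchy_transform t \<mu> y < cauchy_transform t \<mu> x"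
    if "t n < x" "x < y" "y < t (n + 1)" for x y
    using that by (rule transform_strictly_decreasing)
  show "(\<lambda>N. cauchy_sum t \<mu> {- int N..int N} x) \<longlonglongrightarrow> cauchy_transform t \<mu> x"
    if "t n < x" "x < t (n + 1)" for x
    using that by (rule truncations_tendsto)
  show "cauchy_sum t \<mu> {- int N..int N} y \<le> cauchy_sum t \<mu> {- int N..int N} x"
    if "t n < x" "x \<le> y" "y < t (n + 1)" for N x y
    using that by (rule cauchy_sum_antitone_in_gap)
  show "\<forall>\<^sub>F N in sequentially. t n < r N n \<and> r N n < t (n + 1) \<and>
      cauchy_sum t \<mu> {- int N..int N} (r N n) = 0"
    by (rule eventually_mono[OF eventually_subset_symmetric_interval[of "{n}"]]) (auto intro!: r)
qed (use s in auto)

(* Passing to the limit: the zeros of the truncations converge to the zeros s n of the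
   Cauchy transform, so the finite-level estimate survives for the s n, with the total
   mass of \<mu> in place of the truncated one. *)
lemma product_bound_at_zeros:
  assumes s_in: "\<And>n. t n < s n \<and> s n < t (n + 1)"
    and s_zero: "\<And>n. cauchy_transform t \<mu> (s n) = 0"
    and S: "finite S" "\<And>m. m \<in> S \<Longrightarrow> s m \<noteq> 0"
  shows "(\<Prod>m\<in>S. jb (t (outer_end (s m) m)) / jb (s m)) \<le> (\<Sum>\<^sub>\<infinity>k. \<mu> k) * (1 + (t 0)\<^sup>2) / \<mu> 0"
proof -
  obtain r where r: "\<And>N n. n \<in> {- int N..<int N} \<Longrightarrow>
      t n < r N n \<and> r N n < t (n + 1) \<and> cauchy_sum t \<mu> {- int N..int N} (r N n) = 0"
    using truncated_zeros_exist by metis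
  have r_lim: "(\<lambda>N. r N n) \<longlonglongrightarrow> s n" for n
    by (rule truncated_zeros_tendsto[OF r]) (use s_in s_zero in auto)
  have lim: "(\<lambda>N. \<Prod>m\<in>S. jb (t (outer_end (s m) m)) / jb (r N m))
        \<longlonglongrightarrow> (\<Prod>m\<in>S. jb (t (outer_end (s m) m)) / jb (s m))"
    by (intro tendsto_intros isCont_tendsto_compose[OF isCont_jb r_lim] jb_nonzero)
  have "\<forall>\<^sub>F N in sequentially. \<forall>m\<in>S. outer_end (r N m) m = outer_end (s m) m"
    using S by (intro eventually_ball_finite ballI eventually_outer_end_eq r_lim) auto
  then have bound: "\<forall>\<^sub>F N in sequentially.
      (\<Prod>m\<in>S. jb (t (outer_end (s m) m)) / jb (r N m)) \<le> (\<Sum>\<^sub>\<infinity>k. \<mu> k) * (1 + (t 0)\<^sup>2) / \<mu> 0"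
    using eventually_subset_symmetric_interval[OF S(1)]
  proof eventually_elim
    case (elim N)
    have "(\<Prod>m\<in>S. jb (t (outer_end (s m) m)) / jb (r N m))
        = (\<Prod>m\<in>S. jb (t (outer_end (r N m) m)) / jb (r N m))"
      by (rule prod.cong) (use elim(1) in auto)
    also have "\<dots> \<le> sum \<mu> {- int N..int N} * (1 + (t 0)\<^sup>2) / \<mu> 0"
      by (rule truncated_product_bound) (use elim(2) r in auto)
    also have "\<dots> \<le> (\<Sum>\<^sub>\<infinity>k. \<mu> k) * (1 + (t 0)\<^sup>2) / \<mu> 0"
    proof -
      have "sum \<mu> {- int N..int N} \<le> (\<Sum>\<^sub>\<infinity>k. \<mu> k)"
        using \<mu>_sum by (rule finite_sum_le_infsum) (auto simp: less_imp_le \<mu>_pos)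
      then show ?thesis
        using \<mu>_pos[of 0] by (intro divide_right_mono mult_right_mono) auto
    qed
    finally show ?case .
  qed
  show ?thesis
    by (rule tendsto_le[OF trivial_limit_sequentially tendsto_const lim bound])
qed

(* The relative distances from the zeros s n to the outer endpoints of their gaps are
   summable: for |s n| \<ge> 1 they are controlled by the squared bracket ratios, whose finite
   products are bounded, and only finitely many s n have |s n| < 1. *)
lemma relative_gaps_summable:
  assumes t_top: "filterlim t at_top at_top" and t_bot: "filterlim t at_bot at_bot"
    and s_in: "\<And>n. t n < s n \<and> s n < t (n + 1)"
    and s_zero: "\<And>n. cauchy_transform t \<mu> (s n) = 0"
  shows "(\<lambda>n. \<bar>t (outer_end (s n) n) - s n\<bar> / \<bar>s n\<bar>) summable_on {n. s n \<noteq> 0}"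
proof -
  define u where "u n = \<bar>t (outer_end (s n) n) - s n\<bar> / \<bar>s n\<bar>" for n
  define K where "K = (\<Sum>\<^sub>\<infinity>k. \<mu> k) * (1 + (t 0)\<^sup>2) / \<mu> 0"
  have "u summable_on {n. 1 \<le> \<bar>s n\<bar>}"
  proof (rule summable_on_if_prod_bounded)
    fix S assume S: "finite S" "S \<subseteq> {n. 1 \<le> \<bar>s n\<bar>}"
    have "(\<Prod>n\<in>S. 1 + u n) \<le> (\<Prod>n\<in>S. (jb (t (outer_end (s n) n)) / jb (s n))\<^sup>2)"
      using S(2) s_in relative_gap_le_bracket_ratio
      by (intro prod_mono) (auto simp: u_def)
    also have "\<dots> = (\<Prod>n\<in>S. jb (t (outer_end (s n) n)) / jb (s n))\<^sup>2"
      by (rule prod_power_distrib[symmetric])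
    also have "\<dots> \<le> K\<^sup>2"
    proof (intro power_mono prod_nonneg divide_nonneg_nonneg)
      show "(\<Prod>n\<in>S. jb (t (outer_end (s n) n)) / jb (s n)) \<le> K"
        unfolding K_def using S by (intro product_bound_at_zeros[OF s_in s_zero]) force+
    qed (auto simp: jb_pos less_imp_le)
    finally show "(\<Prod>n\<in>S. 1 + u n) \<le> K\<^sup>2" .
  qed (simp add: u_def)
  moreover have "u summable_on {n. s n \<noteq> 0 \<and> \<bar>s n\<bar> < 1}"
    using finitely_many_gaps_near_origin[OF t_top t_bot s_in, of 1]
    by (intro summable_on_finite) (auto elim: finite_subset[rotated])
  ultimately have "u summable_on ({n. 1 \<le> \<bar>s n\<bar>} \<union> {n. s n \<noteq> 0 \<and> \<bar>s n\<bar> < 1})"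
    by (rule summable_on_Un_disjoint) auto
  moreover have "{n. 1 \<le> \<bar>s n\<bar>} \<union> {n. s n \<noteq> 0 \<and> \<bar>s n\<bar> < 1} = {n. s n \<noteq> 0}"
    by auto
  ultimately show ?thesis by (simp add: u_def[abs_def])
qed

end

end

end

(* The theorem: the zeros s n of B are zeros of the Cauchy transform, and the two sums are
   the relative gaps of the previous lemma, split by the sign of s n. *)
theorem proposition5p3:
  fixes t :: "int \<Rightarrow> real" and \<mu> :: "int \<Rightarrow> real"
    and A B :: "complex \<Rightarrow> complex" and s :: "int \<Rightarrow> real"
  assumes t_mono: "strict_mono t"
    and t_top: "filterlim t at_top at_top"
    and t_bot: "filterlim t at_bot at_bot"
    and \<mu>_pos: "\<And>n. \<mu> n > 0"
    and \<mu>_sum: "\<mu> summable_on UNIV"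
    and A_entire: "A holomorphic_on UNIV"
    and A_real: "\<And>x::real. A (complex_of_real x) \<in> \<real>"
    and A_zeros: "{z. A z = 0} = complex_of_real ` range t"
    and A_simple: "\<And>n. deriv A (complex_of_real (t n)) \<noteq> 0"
    and B_entire: "B holomorphic_on UNIV"
    and B_def: "\<And>z. z \<notin> complex_of_real ` range t \<Longrightarrow>
        B z / A z = (\<Sum>\<^sub>\<infinity>n. complex_of_real (\<mu> n) / (z - complex_of_real (t n)))"
    and s_in: "\<And>n. t n < s n \<and> s n < t (n + 1)"
    and s_zero: "\<And>n. B (complex_of_real (s n)) = 0"
  shows "(\<lambda>n. (t (n + 1) - s n) / s n) summable_on {n. s n > 0} \<and>
         (\<lambda>n. (s n - t n) / \<bar>s n\<bar>) summable_on {n. s n < 0}"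
proof -
  have transform_zero: "cauchy_transform t \<mu> (s n) = 0" for n
    using s_in[of n]
    by (intro transform_vanishes_at_zeros_of_quotient[OF t_mono \<mu>_pos \<mu>_sum B_def _ _ s_zero]) auto
  let ?u = "\<lambda>n. \<bar>t (outer_end (s n) n) - s n\<bar> / \<bar>s n\<bar>"
  have "?u summable_on {n. s n \<noteq> 0}"
    by (rule relative_gaps_summable[OF t_mono \<mu>_pos \<mu>_sum t_top t_bot s_in transform_zero])
  then have "?u summable_on {n. s n > 0}" "?u summable_on {n. s n < 0}"
    by (auto elim: summable_on_subset_banach)
  moreover have "?u n = (t (n + 1) - s n) / s n" if "n \<in> {n. s n > 0}" for n
    using that s_in[of n] by (simp add: outer_end_def)
  moreover have "?u n = (s n - t n) / \<bar>s n\<bar>" if "n \<in> {n. s n < 0}" for n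
    using that s_in[of n] by (simp add: outer_end_def)
  ultimately show ?thesis
    by (metis (no_types, lifting) summable_on_cong)
qed

end
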